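(* Let $P$ be an $n\times n$ doubly stochastic matrix satisfying the pattern-symmetry condition $p_{ij}>0\Leftrightarrow p_{ji}>0$ for all $i\neq j$. If $P$ is SIA, then $P$ is a Sarymsakov matrix (i.e., $P\in\mathcal S_1$).
   Context: $\mathcal N=\{1,\ldots,n\}$. A matrix is stochastic if it is entrywise nonnegative with row sums $1$, and doubly stochastic if in addition its column sums are $1$. A stochastic $P$ is SIA if $\lim_{m\to\infty}P^m=\mathbf 1c^T$ for some nonnegative $c$ with entries summing to $1$. For stochastic $P$ and $\mathcal A\subseteq\mathcal N$, $F_P(\mathcal A)=\{j:\ p_{ij}>0\text{ for some } i\in\mathcal A\}$. A Sarymsakov matrix is a stochastic $P$ such that for any disjoint nonempty $\mathcal A,\tilde{\mathcal A}\subseteq\mathcal N$, either $F_P(\mathcal A)\cap F_P(\tilde{\mathcal A})\neq\emptyset$, or $F_P(\mathcal A)\cap F_P(\tilde{\mathcal A})=\emptyset$ and $|F_P(\mathcal A)\cup F_P(\tilde{\mathcal A})|>|\mathcal A\cup\tilde{\mathcal A}|$. *)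

theory Defs
  imports "HOL-Analysis.Analysis"
begin

definition stochastic :: "real^'n^'n \<Rightarrow> bool" where
  "stochastic P \<longleftrightarrow> (\<forall>i j. P $ i $ j \<ge> 0) \<and> (\<forall>i. (\<Sum>j\<in>UNIV. P $ i $ j) = 1)"

definition doubly_stochastic :: "real^'n^'n \<Rightarrow> bool" where
  "doubly_stochastic P \<longleftrightarrow> stochastic P \<and> (\<forall>j. (\<Sum>i\<in>UNIV. P $ i $ j) = 1)"

primrec mat_pow :: "real^'n^'n \<Rightarrow> nat \<Rightarrow> real^'n^'n" where
  "mat_pow P 0 = mat 1"
| "mat_pow P (Suc m) = mat_pow P m ** P"

definition SIA :: "real^'n^'n \<Rightarrow> bool" where
  "SIA P \<longleftrightarrow> stochastic P \<and>
     (\<exists>c :: real^'n. (\<forall>j. c $ j \<ge> 0) \<and> (\<Sum>j\<in>UNIV. c $ j) = 1 \<and>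
        (\<lambda>m. mat_pow P m) \<longlonglongrightarrow> (\<chi> i j. c $ j))"

definition F_set :: "real^'n^'n \<Rightarrow> 'n set \<Rightarrow> 'n set" where
  "F_set P A = {j. \<exists>i\<in>A. P $ i $ j > 0}"

definition sarymsakov :: "real^'n^'n \<Rightarrow> bool" where
  "sarymsakov P \<longleftrightarrow> stochastic P \<and>
     (\<forall>A B :: 'n set. A \<noteq> {} \<longrightarrow> B \<noteq> {} \<longrightarrow> A \<inter> B = {} \<longrightarrow>
        F_set P A \<inter> F_set P B \<noteq> {} \<or>
        (F_set P A \<inter> F_set P B = {} \<and> card (F_set P A \<union> F_set P B) > card (A \<union> B)))"

end

theory Submission
  imports Defs
begin

text \<open>Since P is doubly stochastic, |F(X)| - |X| is the mass that rows outside X put on the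
  columns F(X); so |F(X)| \<ge> |X|, and in case of equality those columns are fed only from X.
  With the pattern symmetry this makes X \<union> F(X) closed under F. On the other hand the SIA limit
  of a doubly stochastic matrix is the uniform matrix, so all entries of P^m are eventually
  positive, and no proper nonempty set X can satisfy F^k(X) \<subseteq> X for some k > 0. If the
  Sarymsakov condition failed for disjoint A, B, both would be tight, hence F(A) \<subseteq> B and
  F(B) \<subseteq> A, so F(F(A)) \<subseteq> A with A \<noteq> UNIV.\<close>

lemma doubly_stochastic_nonneg:
  "doubly_stochastic P \<Longrightarrow> P $ i $ j \<ge> 0"
  by (simp add: doubly_stochastic_def stochastic_def)

lemma F_set_mono: "mono (F_set P)"
  unfolding F_set_def by (rule monoI) blast

lemma F_set_Un: "F_set P (A \<union> B) = F_set P A \<union> F_set P B"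
  unfolding F_set_def by auto

lemma F_set_mat_1: "F_set (mat 1) X = X"
  unfolding F_set_def by (auto simp: mat_def)

lemma F_set_matrix_mult_subset:
  assumes "\<And>i j. B $ i $ j \<ge> 0"
  shows "F_set (A ** B) X \<subseteq> F_set B (F_set A X)"
proof
  fix k assume "k \<in> F_set (A ** B) X"
  then obtain i where i: "i \<in> X" and "(\<Sum>j\<in>UNIV. A $ i $ j * B $ j $ k) > 0"
    by (auto simp: F_set_def matrix_matrix_mult_def)
  then obtain j where "A $ i $ j * B $ j $ k > 0"
    by (metis (no_types, lifting) not_le sum_nonpos)
  then have "A $ i $ j > 0" "B $ j $ k > 0"
    using assms[of j k] by (auto simp: zero_less_mult_iff)
  with i show "k \<in> F_set B (F_set A X)"
    unfolding F_set_def by blast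
qed

lemma F_set_mat_pow_subset:
  assumes "\<And>i j. P $ i $ j \<ge> 0"
  shows "F_set (mat_pow P m) X \<subseteq> (F_set P ^^ m) X"
proof (induction m)
  case 0
  then show ?case by (simp add: F_set_mat_1)
next
  case (Suc m)
  have "F_set (mat_pow P (Suc m)) X \<subseteq> F_set P (F_set (mat_pow P m) X)"
    using F_set_matrix_mult_subset[OF assms] by simp
  also have "\<dots> \<subseteq> (F_set P ^^ Suc m) X"
    using Suc monoD[OF F_set_mono] by simp
  finally show ?case .
qed

lemma funpow_mult_subset:
  assumes "mono f" and "(f ^^ q) X \<subseteq> X"
  shows "(f ^^ (q * k)) X \<subseteq> X"
proof (induction k)
  case (Suc k)
  have "(f ^^ (q * Suc k)) X = (f ^^ q) ((f ^^ (q * k)) X)"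
    by (simp add: funpow_add)
  also have "\<dots> \<subseteq> (f ^^ q) X"
    using Suc funpow_mono[OF assms(1)] by blast
  finally show ?case using assms(2) by blast
qed simp

lemma doubly_stochastic_mat_pow_column_sum:
  assumes "doubly_stochastic P"
  shows "(\<Sum>i\<in>UNIV. mat_pow P m $ i $ k) = 1"
proof (induction m arbitrary: k)
  case 0
  then show ?case by (simp add: mat_def)
next
  case (Suc m)
  have "(\<Sum>i\<in>UNIV. mat_pow P (Suc m) $ i $ k)
      = (\<Sum>i\<in>UNIV. \<Sum>j\<in>UNIV. mat_pow P m $ i $ j * P $ j $ k)"
    by (simp add: matrix_matrix_mult_def)
  also have "\<dots> = (\<Sum>j\<in>UNIV. (\<Sum>i\<in>UNIV. mat_pow P m $ i $ j) * P $ j $ k)"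
    by (subst sum.swap) (simp add: sum_distrib_right)
  also have "\<dots> = 1"
    using Suc assms by (simp add: doubly_stochastic_def)
  finally show ?case .
qed

lemma SIA_doubly_stochastic_eventually_positive:
  fixes P :: "real^'n^'n"
  assumes ds: "doubly_stochastic P" and sia: "SIA P"
  shows "\<forall>\<^sub>F m in sequentially. \<forall>i k. mat_pow P m $ i $ k > 0"
proof -
  obtain c :: "real^'n" where "(\<lambda>m. mat_pow P m) \<longlonglongrightarrow> (\<chi> i j. c $ j)"
    using sia unfolding SIA_def by blast
  then have lim: "(\<lambda>m. mat_pow P m $ i $ k) \<longlonglongrightarrow> c $ k" for i k
    using tendsto_vec_nth[OF tendsto_vec_nth] by fastforce
  have "(\<lambda>m. \<Sum>i\<in>UNIV. mat_pow P m $ i $ k) \<longlonglongrightarrow> (\<Sum>i\<in>(UNIV::'n set). c $ k)" for k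
    by (intro tendsto_sum lim)
  then have "(\<Sum>i\<in>(UNIV::'n set). c $ k) = 1" for k
    using doubly_stochastic_mat_pow_column_sum[OF ds] LIMSEQ_unique tendsto_const by fastforce
  then have "0 < real CARD('n) * c $ k" for k
    by simp
  then have "c $ k > 0" for k
    by (simp add: zero_less_mult_iff)
  then have "\<forall>\<^sub>F m in sequentially. mat_pow P m $ i $ k > 0" for i k
    using lim order_tendstoD(1) by blast
  then show ?thesis
    by (simp add: eventually_all_finite)
qed

lemma SIA_doubly_stochastic_no_proper_recurrent_set:
  assumes ds: "doubly_stochastic P" and sia: "SIA P"
    and ne: "X \<noteq> {}" and rec: "(F_set P ^^ Suc p) X \<subseteq> X"
  shows "X = UNIV"
proof -
  obtain N where pos: "\<And>i k. mat_pow P (Suc p * N) $ i $ k > 0"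
    using SIA_doubly_stochastic_eventually_positive[OF ds sia]
    unfolding eventually_sequentially by (metis le_add1 mult_Suc)
  have "UNIV = F_set (mat_pow P (Suc p * N)) X"
    using ne pos unfolding F_set_def by blast
  also have "\<dots> \<subseteq> (F_set P ^^ (Suc p * N)) X"
    using F_set_mat_pow_subset doubly_stochastic_nonneg[OF ds] by blast
  also have "\<dots> \<subseteq> X"
    using funpow_mult_subset[OF F_set_mono rec] .
  finally show ?thesis by blast
qed

lemma doubly_stochastic_card_F_set:
  assumes ds: "doubly_stochastic P"
  shows "real (card (F_set P X)) = real (card X) + (\<Sum>j\<in>F_set P X. \<Sum>i\<in>-X. P $ i $ j)"
proof -
  have rows: "(\<Sum>j\<in>UNIV. P $ i $ j) = 1" and cols: "(\<Sum>i\<in>UNIV. P $ i $ j) = 1" for i j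
    using ds by (simp_all add: doubly_stochastic_def stochastic_def)
  have outside: "P $ i $ j = 0" if "i \<in> X" "j \<notin> F_set P X" for i j
    using that doubly_stochastic_nonneg[OF ds, of i j] unfolding F_set_def by force
  have "real (card X) = (\<Sum>i\<in>X. \<Sum>j\<in>UNIV. P $ i $ j)"
    using rows by simp
  also have "\<dots> = (\<Sum>i\<in>X. \<Sum>j\<in>F_set P X. P $ i $ j)"
    by (intro sum.cong refl sum.mono_neutral_right) (auto simp: outside)
  also have "\<dots> = (\<Sum>j\<in>F_set P X. \<Sum>i\<in>X. P $ i $ j)"
    by (rule sum.swap)
  finally have from_X: "real (card X) = (\<Sum>j\<in>F_set P X. \<Sum>i\<in>X. P $ i $ j)" .
  have "real (card (F_set P X)) = (\<Sum>j\<in>F_set P X. \<Sum>i\<in>X \<union> -X. P $ i $ j)"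
    using cols by (simp add: Compl_partition)
  also have "\<dots> = (\<Sum>j\<in>F_set P X. (\<Sum>i\<in>X. P $ i $ j) + (\<Sum>i\<in>-X. P $ i $ j))"
    by (intro sum.cong refl sum.union_disjoint) auto
  finally show ?thesis
    by (simp add: sum.distrib from_X)
qed

lemma doubly_stochastic_card_le_card_F_set:
  "doubly_stochastic P \<Longrightarrow> card X \<le> card (F_set P X)"
proof -
  assume ds: "doubly_stochastic P"
  have "(\<Sum>j\<in>F_set P X. \<Sum>i\<in>-X. P $ i $ j) \<ge> 0"
    by (intro sum_nonneg) (rule doubly_stochastic_nonneg[OF ds])
  then show ?thesis
    using doubly_stochastic_card_F_set[OF ds, of X] by linarith
qed

lemma doubly_stochastic_tight_F_set_column:
  assumes ds: "doubly_stochastic P" and tight: "card (F_set P X) = card X"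
    and "i \<notin> X" and "j \<in> F_set P X"
  shows "P $ i $ j = 0"
proof -
  have "(\<Sum>j\<in>F_set P X. \<Sum>i\<in>-X. P $ i $ j) = 0"
    using doubly_stochastic_card_F_set[OF ds, of X] tight by simp
  then have "(\<Sum>i\<in>-X. P $ i $ j) = 0"
    using assms(4) by (simp add: sum_nonneg_eq_0_iff sum_nonneg doubly_stochastic_nonneg[OF ds])
  then show ?thesis
    using assms(3) by (simp add: sum_nonneg_eq_0_iff doubly_stochastic_nonneg[OF ds])
qed

lemma tight_F_set_closed:
  assumes ds: "doubly_stochastic P" and tight: "card (F_set P X) = card X"
    and sym: "\<forall>i j. i \<noteq> j \<longrightarrow> (P $ i $ j > 0 \<longleftrightarrow> P $ j $ i > 0)"
  shows "F_set P (X \<union> F_set P X) \<subseteq> X \<union> F_set P X"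
proof -
  have "k \<in> X \<union> F_set P X" if "j \<in> F_set P X" "P $ j $ k > 0" for j k
  proof (cases "k = j")
    case False
    then have "P $ k $ j > 0"
      using sym that(2) by blast
    then show ?thesis
      using doubly_stochastic_tight_F_set_column[OF ds tight _ that(1)] by force
  qed (use that in simp)
  then show ?thesis
    unfolding F_set_Un by (auto simp: F_set_def)
qed

theorem proposition4:
  fixes P :: "real^'n^'n"
  assumes "doubly_stochastic P"
    and "\<forall>i j. i \<noteq> j \<longrightarrow> (P $ i $ j > 0 \<longleftrightarrow> P $ j $ i > 0)"
    and "SIA P"
  shows "sarymsakov P"
proof -
  note ds = assms(1) and sym = assms(2) and sia = assms(3)
  have spanning: "X \<union> F_set P X = UNIV" if "X \<noteq> {}" "card (F_set P X) = card X" for X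
    using SIA_doubly_stochastic_no_proper_recurrent_set[OF ds sia, of _ 0]
      tight_F_set_closed[OF ds that(2) sym] that(1) by simp
  have "F_set P A \<inter> F_set P B \<noteq> {} \<or> card (F_set P A \<union> F_set P B) > card (A \<union> B)"
    if A: "A \<noteq> {}" and B: "B \<noteq> {}" and AB: "A \<inter> B = {}" for A B :: "'n set"
  proof (rule ccontr)
    assume "\<not> ?thesis"
    then have disj: "F_set P A \<inter> F_set P B = {}"
      and "card (F_set P A) + card (F_set P B) \<le> card A + card B"
      using AB by (auto simp: card_Un_disjoint)
    moreover have "card A \<le> card (F_set P A)" "card B \<le> card (F_set P B)"
      using doubly_stochastic_card_le_card_F_set[OF ds] by blast+
    ultimately have "card (F_set P A) = card A" "card (F_set P B) = card B"
      by linarith+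
    then have "A \<union> F_set P A = UNIV" "B \<union> F_set P B = UNIV"
      using spanning A B by blast+
    then have "F_set P A \<subseteq> B" "F_set P B \<subseteq> A"
      using disj by blast+
    then have "(F_set P ^^ Suc 1) A \<subseteq> A"
      using monoD[OF F_set_mono[of P], of "F_set P A" B] by auto
    then show False
      using SIA_doubly_stochastic_no_proper_recurrent_set[OF ds sia A] AB B by blast
  qed
  then show ?thesis
    using ds by (auto simp: sarymsakov_def doubly_stochastic_def)
qed

end
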